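(* Let $q$ be a prime power, $k\ge 1$, $d\ge1$, and write $d=\sigma q^{k-1}-\sum_{i=0}^{k-2}\varepsilon_i q^i$ with $\sigma$ an integer and $0\le \varepsilon_i\le q-1$. Let $C$ be a linear $[n,k,d]_q$ code with $n=g_q(k,d)$. Then for every $1\le r\le k$, \[ d_r(C)=v_r\Bigl(\sigma q^{k-r}-\sum_{i=r}^{k-1}\varepsilon_{i-1}q^{i-r}\Bigr)-\sum_{i=1}^{r-1}\varepsilon_{i-1}v_i, \] and $C$ attains the Griesmer bound for the $r$th generalized Hamming weight, i.e. $n=g_q^{(r)}(k,d_r(C))$.
   Context: $v_j=(q^j-1)/(q-1)$. An $[n,k,d]_q$ code is a $k$-dimensional subspace of $\mathbb{F}_q^n$ with minimum Hamming distance $d$. $g_q(k,d)=\sum_{i=0}^{k-1}\lceil d/q^i\rceil$ (the Griesmer bound). For a subcode $C'\le C$, its support is the set of coordinates in which some codeword of $C'$ is nonzero; the $r$th generalized Hamming weight $d_r(C)$ is the minimum support size of an $r$-dimensional subcode of $C$. For $1\le r\le k$, $g_q^{(r)}(k,d)=d+\sum_{i=1}^{k-r}\lceil d/(q^iv_r)\rceil$. *)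

theory Defs
  imports "HOL-Analysis.Analysis"
begin

text \<open>Codes of length n = CARD('n) over the finite field 'a (q = CARD('a), a prime power):
  linear subspaces of 'a^'n, using the vector-space interpretation vec of Cartesian_Space.\<close>

definition hamming_dist :: "'a::zero ^ 'n \<Rightarrow> 'a ^ 'n \<Rightarrow> nat" where
  "hamming_dist x y = card {i. x $ i \<noteq> y $ i}"

definition min_dist :: "('a::zero ^ 'n) set \<Rightarrow> nat" where
  "min_dist C = Min {hamming_dist x y | x y. x \<in> C \<and> y \<in> C \<and> x \<noteq> y}"

definition is_linear_code :: "('a::{field,finite} ^ 'n) set \<Rightarrow> nat \<Rightarrow> nat \<Rightarrow> bool" where
  "is_linear_code C k d \<longleftrightarrow> vec.subspace C \<and> vec.dim C = k \<and> min_dist C = d"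

definition code_support :: "('a::zero ^ 'n) set \<Rightarrow> 'n set" where
  "code_support D = {i. \<exists>x\<in>D. x $ i \<noteq> 0}"

definition gen_weight :: "('a::{field,finite} ^ 'n) set \<Rightarrow> nat \<Rightarrow> nat" where
  "gen_weight C r = Min {card (code_support D) | D. vec.subspace D \<and> D \<subseteq> C \<and> vec.dim D = r}"

definition vnum :: "nat \<Rightarrow> nat \<Rightarrow> nat" where
  "vnum q j = (q ^ j - 1) div (q - 1)"

definition griesmer :: "nat \<Rightarrow> nat \<Rightarrow> nat \<Rightarrow> nat" where
  "griesmer q k d = (\<Sum>i<k. nat \<lceil>real d / real q ^ i\<rceil>)"

definition griesmer_r :: "nat \<Rightarrow> nat \<Rightarrow> nat \<Rightarrow> nat \<Rightarrow> nat" where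
  "griesmer_r q r k d = d + (\<Sum>i\<in>{1..k-r}. nat \<lceil>real d / (real q ^ i * real (vnum q r))\<rceil>)"

end

theory Submission
  imports Defs
begin

(* Let c be a codeword of minimum weight w in a linear code C over F_q of dimension k.  Puncturing
   C on the support of c gives a residual code of dimension k - 1 (the kernel of the puncturing is
   the line through c) whose nonzero words have weight at least ceil(w/q).  Induction gives the
   Griesmer bound g_q(k,d) <= |supp C|.  If C attains it, then w = d and the residual code attains
   the bound for ceil(d/q), so lifting its subcodes produces r-dimensional subcodes of C supported
   on g_q(r,d) coordinates; the bound applied to the subcodes themselves gives d_r(C) = g_q(r,d).
   The closed formula comes from ceil(d/q^j) = sigma q^(k-1-j) - sum_{i=j}^{k-2} eps_i q^(i-j),
   which holds because the eps_i are base-q digits, and n = g_q^(r)(k, g_q(r,d)) because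
   ceil(g_q(r,d) / (q^i v_r)) = ceil(d / q^(r-1+i)). *)

section \<open>Ceiling division and the Griesmer function\<close>

definition ceil_div :: "nat \<Rightarrow> nat \<Rightarrow> nat" where
  "ceil_div a b = (a + b - 1) div b"

lemma ceil_div_le_iff:
  assumes "b > 0" shows "ceil_div a b \<le> y \<longleftrightarrow> a \<le> y * b"
proof -
  have "ceil_div a b \<le> y \<longleftrightarrow> a + b - 1 < Suc y * b"
    unfolding ceil_div_def using assms by (simp add: div_less_iff_less_mult flip: less_Suc_eq_le)
  with assms show ?thesis by auto
qed

lemma ceil_div_eq_iff:
  assumes "b > 0" shows "ceil_div a b = z \<longleftrightarrow> a \<le> z * b \<and> z * b < a + b"
proof -
  have "ceil_div a b = z \<longleftrightarrow> z * b \<le> a + b - 1 \<and> a + b - 1 < Suc z * b"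
    unfolding ceil_div_def using assms
    by (metis div_less_iff_less_mult div_nat_eqI lessI mult.commute times_div_less_eq_dividend)
  with assms show ?thesis by auto
qed

lemma eq_if_same_upper_bounds:
  fixes x y :: "'a::order"
  shows "(\<And>z. x \<le> z \<longleftrightarrow> y \<le> z) \<Longrightarrow> x = y"
  by (metis order.refl order.antisym)

lemma ceil_div_ceil_div:
  "b > 0 \<Longrightarrow> c > 0 \<Longrightarrow> ceil_div (ceil_div a b) c = ceil_div a (b * c)"
  by (rule eq_if_same_upper_bounds) (simp add: ceil_div_le_iff mult_ac)

lemma nat_ceiling_divide: "b > 0 \<Longrightarrow> nat \<lceil>real a / real b\<rceil> = ceil_div a b"
  by (rule eq_if_same_upper_bounds)
     (simp add: ceil_div_le_iff nat_le_iff ceiling_le_iff pos_divide_le_eq flip: of_nat_mult)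

lemma ceil_div_sum_eq:
  assumes "finite J" "J \<noteq> {}" "\<And>j. j \<in> J \<Longrightarrow> b j > 0"
    and "\<And>j. j \<in> J \<Longrightarrow> ceil_div (a j) (b j) = z"
  shows "ceil_div (\<Sum>j\<in>J. a j) (\<Sum>j\<in>J. b j) = z"
proof -
  have "a j \<le> z * b j \<and> z * b j < a j + b j" if "j \<in> J" for j
    using assms(3,4) that ceil_div_eq_iff by blast
  then have "(\<Sum>j\<in>J. a j) \<le> z * (\<Sum>j\<in>J. b j) \<and> z * (\<Sum>j\<in>J. b j) < (\<Sum>j\<in>J. a j) + (\<Sum>j\<in>J. b j)"
    using assms(1,2) by (auto simp: sum_distrib_left intro!: sum_mono sum_strict_mono simp flip: sum.distrib)
  moreover have "(\<Sum>j\<in>J. b j) > 0"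
    using assms(1-3) by (simp add: sum_pos)
  ultimately show ?thesis
    using ceil_div_eq_iff by blast
qed

lemma ceil_div_mono: "a \<le> a' \<Longrightarrow> ceil_div a b \<le> ceil_div a' b"
  unfolding ceil_div_def by (simp add: div_le_mono)

lemma griesmer_eq_sum_ceil_div: "q > 0 \<Longrightarrow> griesmer q k d = (\<Sum>i<k. ceil_div d (q ^ i))"
  unfolding griesmer_def by (simp add: nat_ceiling_divide flip: of_nat_power)

lemma griesmer_Suc:
  assumes "q > 0" shows "griesmer q (Suc k) d = d + griesmer q k (ceil_div d q)"
  unfolding griesmer_eq_sum_ceil_div[OF assms] sum.lessThan_Suc_shift
  using assms by (simp add: ceil_div_ceil_div) (simp add: ceil_div_def)

lemma griesmer_mono: "d \<le> d' \<Longrightarrow> griesmer q k d \<le> griesmer q k d'"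
  unfolding griesmer_def by (intro sum_mono nat_mono ceiling_mono divide_right_mono) auto

lemma griesmer_strict_mono:
  assumes "q > 0" "k > 0" "d < d'" shows "griesmer q k d < griesmer q k d'"
proof -
  obtain m where "k = Suc m"
    using assms(2) gr0_implies_Suc by blast
  with assms show ?thesis
    by (simp add: griesmer_Suc add_less_le_mono griesmer_mono ceil_div_mono)
qed

lemma vnum_eq_sum: assumes "q \<ge> 2" shows "vnum q n = (\<Sum>i<n. q ^ i)"
proof -
  have "int (q ^ n - 1) = int ((q - 1) * (\<Sum>i<n. q ^ i))"
    using assms power_diff_1_eq[of "int q" n] by simp
  then show ?thesis
    unfolding vnum_def using assms by (simp only: of_nat_eq_iff) simp
qed

lemma vnum_Suc: "q \<ge> 2 \<Longrightarrow> vnum q (Suc r) = q * vnum q r + 1"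
  unfolding vnum_eq_sum sum.lessThan_Suc_shift by (simp add: sum_distrib_left)

lemma vnum_1: "q \<ge> 2 \<Longrightarrow> vnum q 1 = 1"
  by (simp add: vnum_def)

lemma ceil_div_griesmer_vnum:
  assumes "q \<ge> 2" "r \<ge> 1"
  shows "ceil_div (griesmer q r d) (q ^ i * vnum q r) = ceil_div d (q ^ (r - 1 + i))"
proof -
  have q: "q > 0"
    using assms(1) by simp
  have "q ^ i * vnum q r = (\<Sum>j<r. q ^ i * q ^ (r - Suc j))"
    using sum.nat_diff_reindex[of "\<lambda>j. q ^ i * q ^ j" r]
    by (simp add: vnum_eq_sum[OF assms(1)] sum_distrib_left)
  also have "\<dots> = (\<Sum>j<r. q ^ (r - Suc j + i))"
    by (intro sum.cong refl) (metis power_add mult.commute)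
  finally have b: "q ^ i * vnum q r = (\<Sum>j<r. q ^ (r - Suc j + i))" .
  have "ceil_div (ceil_div d (q ^ j)) (q ^ (r - Suc j + i)) = ceil_div d (q ^ (r - 1 + i))" if "j < r" for j
    using that q by (simp add: ceil_div_ceil_div flip: power_add)
  then show ?thesis
    unfolding griesmer_eq_sum_ceil_div[OF q] b using assms(2) q
    by (intro ceil_div_sum_eq) (auto simp: lessThan_empty_iff)
qed

lemma griesmer_r_griesmer:
  assumes "q \<ge> 2" "1 \<le> r" "r \<le> k"
  shows "griesmer_r q r k (griesmer q r d) = griesmer q k d"
proof -
  have q: "q > 0"
    using assms(1) by simp
  have "vnum q r > 0"
    using assms(1,2) by (cases r) (simp_all add: vnum_Suc)
  then have "nat \<lceil>real (griesmer q r d) / (real q ^ i * real (vnum q r))\<rceil> = ceil_div d (q ^ (r - 1 + i))" for i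
    using nat_ceiling_divide[of "q ^ i * vnum q r"] ceil_div_griesmer_vnum[OF assms(1,2)] q by simp
  then have "griesmer_r q r k (griesmer q r d) = griesmer q r d + (\<Sum>i\<in>{1..k-r}. ceil_div d (q ^ (i + (r - 1))))"
    unfolding griesmer_r_def by (simp add: add.commute)
  also have "(\<Sum>i\<in>{1..k-r}. ceil_div d (q ^ (i + (r - 1)))) = (\<Sum>j\<in>{r..<k}. ceil_div d (q ^ j))"
    using assms(2,3) sum.shift_bounds_cl_nat_ivl[of "\<lambda>j. ceil_div d (q ^ j)" 1 "r - 1" "k - r"]
    by (simp add: atLeastLessThanSuc_atLeastAtMost[symmetric])
  also have "griesmer q r d + \<dots> = griesmer q k d"
    unfolding griesmer_eq_sum_ceil_div[OF q] lessThan_atLeast0 using assms(3)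
    by (simp add: sum.atLeastLessThan_concat)
  finally show ?thesis .
qed

section \<open>Base-q expansions of the minimum distance\<close>

lemma sum_digits_bounds:
  fixes \<epsilon> :: "nat \<Rightarrow> int"
  assumes "\<And>j. j < m \<Longrightarrow> 0 \<le> \<epsilon> j \<and> \<epsilon> j \<le> int q - 1"
  shows "0 \<le> (\<Sum>j<m. \<epsilon> j * int q ^ j) \<and> (\<Sum>j<m. \<epsilon> j * int q ^ j) < int q ^ m"
  using assms
proof (induction m)
  case (Suc m)
  then have "0 \<le> \<epsilon> m * int q ^ m \<and> \<epsilon> m * int q ^ m \<le> (int q - 1) * int q ^ m"
    by (simp add: mult_right_mono)
  with Suc show ?case
    by (simp add: algebra_simps)
qed simp

lemma sum_linear_recurrence:
  fixes X e :: "nat \<Rightarrow> int"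
  assumes "q \<ge> 2" and "r \<ge> 1" and "\<And>j. Suc j < r \<Longrightarrow> X j = int q * X (Suc j) - e j"
  shows "(\<Sum>j<r. X j) = int (vnum q r) * X (r - 1) - (\<Sum>i\<in>{1..r-1}. e (i - 1) * int (vnum q i))"
  using assms(2,3)
proof (induction r rule: nat_induct_at_least)
  case base
  show ?case
    using vnum_1[OF assms(1)] by simp
next
  case (Suc r)
  have IH: "(\<Sum>j<r. X j) = int (vnum q r) * X (r - 1) - (\<Sum>i\<in>{1..r-1}. e (i - 1) * int (vnum q i))"
    using Suc.prems by (intro Suc.IH) simp
  have rec: "X (r - 1) = int q * X r - e (r - 1)"
    using Suc.prems[of "r - 1"] \<open>r \<ge> 1\<close> by simp
  have "{1..r} = insert r {1..r-1}"
    using \<open>r \<ge> 1\<close> by auto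
  with \<open>r \<ge> 1\<close> show ?case
    unfolding sum.lessThan_Suc IH rec by (simp add: vnum_Suc[OF assms(1)] algebra_simps)
qed

locale q_adic_expansion =
  fixes q k d :: nat and \<sigma> :: int and \<epsilon> :: "nat \<Rightarrow> int"
  assumes q: "q \<ge> 2"
    and digits: "\<And>i. i < k - 1 \<Longrightarrow> 0 \<le> \<epsilon> i \<and> \<epsilon> i \<le> int q - 1"
    and expansion: "int d = \<sigma> * int q ^ (k - 1) - (\<Sum>i\<in>{0..<k-1}. \<epsilon> i * int q ^ i)"
begin

lemma q_pos: "q > 0"
  using q by simp

lemma ceil_div_power_eq:
  assumes "j < k"
  shows "int (ceil_div d (q ^ j)) = \<sigma> * int q ^ (k - 1 - j) - (\<Sum>i\<in>{j..<k-1}. \<epsilon> i * int q ^ (i - j))"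
    (is "_ = ?X")
proof -
  define L where "L = (\<Sum>i<j. \<epsilon> i * int q ^ i)"
  have L: "0 \<le> L \<and> L < int q ^ j"
    unfolding L_def using \<open>j < k\<close> by (intro sum_digits_bounds digits) simp
  have "(\<Sum>i\<in>{0..<k-1}. \<epsilon> i * int q ^ i) = L + (\<Sum>i\<in>{j..<k-1}. \<epsilon> i * int q ^ i)"
    unfolding L_def lessThan_atLeast0 using \<open>j < k\<close> by (simp add: sum.atLeastLessThan_concat)
  moreover have "(\<Sum>i\<in>{j..<k-1}. \<epsilon> i * int q ^ (i - j)) * int q ^ j = (\<Sum>i\<in>{j..<k-1}. \<epsilon> i * int q ^ i)"
    unfolding sum_distrib_right by (intro sum.cong) (simp_all add: mult.assoc flip: power_add)
  moreover have "int q ^ (k - 1 - j) * int q ^ j = int q ^ (k - 1)"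
    using \<open>j < k\<close> by (simp flip: power_add)
  ultimately have X: "?X * int q ^ j = int d + L"
    using expansion by (simp add: algebra_simps)
  have "0 < int q ^ j"
    using q_pos by simp
  then have "?X \<ge> 0"
    using X L by (metis add_nonneg_nonneg of_nat_0_le_iff zero_le_mult_iff linorder_not_le)
  then obtain z where z: "?X = int z"
    using nonneg_int_cases by blast
  with X L have "int d \<le> int (z * q ^ j) \<and> int (z * q ^ j) < int (d + q ^ j)"
    by simp
  then have "ceil_div d (q ^ j) = z"
    using q_pos by (simp add: ceil_div_eq_iff del: of_nat_mult of_nat_add of_nat_power)
  with z show ?thesis
    by simp
qed

lemma ceil_div_power_recurrence:
  assumes "Suc j < k"
  shows "int (ceil_div d (q ^ j)) = int q * int (ceil_div d (q ^ Suc j)) - \<epsilon> j"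
proof -
  define S where "S = (\<Sum>i\<in>{Suc j..<k-1}. \<epsilon> i * int q ^ (i - Suc j))"
  have "(\<Sum>i\<in>{Suc j..<k-1}. \<epsilon> i * int q ^ (i - j)) = int q * S"
    unfolding S_def sum_distrib_left
  proof (intro sum.cong refl)
    fix i assume "i \<in> {Suc j..<k-1}"
    then have "i - j = Suc (i - Suc j)"
      by auto
    then show "\<epsilon> i * int q ^ (i - j) = int q * (\<epsilon> i * int q ^ (i - Suc j))"
      by simp
  qed
  moreover have "{j..<k-1} = insert j {Suc j..<k-1}"
    using assms by auto
  ultimately have "(\<Sum>i\<in>{j..<k-1}. \<epsilon> i * int q ^ (i - j)) = \<epsilon> j + int q * S"
    by simp
  moreover have "k - 1 - j = Suc (k - 1 - Suc j)"
    using assms by simp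
  ultimately have "int (ceil_div d (q ^ j)) = int q * (\<sigma> * int q ^ (k - 1 - Suc j) - S) - \<epsilon> j"
    using ceil_div_power_eq[of j] assms by (simp add: algebra_simps)
  with ceil_div_power_eq[of "Suc j"] assms show ?thesis
    unfolding S_def by simp
qed

lemma griesmer_closed_form:
  assumes "1 \<le> r" "r \<le> k"
  shows "int (griesmer q r d) = int (vnum q r) * (\<sigma> * int q ^ (k - r)
           - (\<Sum>i\<in>{r..k-1}. \<epsilon> (i - 1) * int q ^ (i - r)))
           - (\<Sum>i\<in>{1..r-1}. \<epsilon> (i - 1) * int (vnum q i))"
proof -
  have "int (griesmer q r d) = (\<Sum>j<r. int (ceil_div d (q ^ j)))"
    using q_pos by (simp add: griesmer_eq_sum_ceil_div)
  also have "\<dots> = int (vnum q r) * int (ceil_div d (q ^ (r - 1)))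
                     - (\<Sum>i\<in>{1..r-1}. \<epsilon> (i - 1) * int (vnum q i))"
    using assms by (intro sum_linear_recurrence q ceil_div_power_recurrence) auto
  also have "int (ceil_div d (q ^ (r - 1))) = \<sigma> * int q ^ (k - r) - (\<Sum>i\<in>{r..k-1}. \<epsilon> (i - 1) * int q ^ (i - r))"
  proof -
    have "{r..k-1} = {Suc (r - 1)..<Suc (k - 1)}"
      using assms by auto
    then have "(\<Sum>i\<in>{r..k-1}. \<epsilon> (i - 1) * int q ^ (i - r)) = (\<Sum>i\<in>{r-1..<k-1}. \<epsilon> i * int q ^ (i - (r - 1)))"
      using assms(1) by (simp only: sum.shift_bounds_Suc_ivl) (simp add: Suc_diff_le)
    then show ?thesis
      using ceil_div_power_eq[of "r - 1"] assms by (simp add: diff_diff_add)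
  qed
  finally show ?thesis .
qed

end

section \<open>Residual codes and the Griesmer bound\<close>

definition vec_support :: "'a::zero ^ 'n \<Rightarrow> 'n set" where
  "vec_support x = {i. x $ i \<noteq> 0}"

definition hamming_weight :: "'a::zero ^ 'n \<Rightarrow> nat" where
  "hamming_weight x = card (vec_support x)"

(* Punctured coordinates are set to zero rather than deleted, so punctured codes stay in 'a ^ 'n. *)
definition puncture :: "'n set \<Rightarrow> 'a::zero ^ 'n \<Rightarrow> 'a ^ 'n" where
  "puncture T x = (\<chi> i. if i \<in> T then 0 else x $ i)"

lemma linear_puncture: "Vector_Spaces.linear (*s) (*s) (puncture T :: 'a::field ^ 'n \<Rightarrow> _)"
  by unfold_locales (simp_all add: puncture_def vec_eq_iff)

lemma puncture_0 [simp]: "puncture T 0 = 0"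
  by (simp add: puncture_def vec_eq_iff)

lemma puncture_eq_0_iff: "puncture T x = 0 \<longleftrightarrow> vec_support x \<subseteq> T"
  unfolding puncture_def vec_support_def by (auto simp: vec_eq_iff)

lemma code_support_puncture_image: "code_support (puncture T ` C) = code_support C - T"
  unfolding code_support_def puncture_def by auto

lemma hamming_dist_0: "hamming_dist x 0 = hamming_weight x"
  unfolding hamming_dist_def hamming_weight_def vec_support_def by simp

lemma dim_image_line_kernel:
  fixes f :: "'a::field ^ 'n \<Rightarrow> 'a ^ 'm"
  assumes f: "Vector_Spaces.linear (*s) (*s) f" and D: "vec.subspace D"
    and c: "c \<in> D" "c \<noteq> 0" "f c = 0"
    and kernel: "\<And>x. x \<in> D \<Longrightarrow> f x = 0 \<Longrightarrow> x \<in> vec.span {c}"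
  shows "vec.dim (f ` D) + 1 = vec.dim D"
proof -
  obtain B where B: "{c} \<subseteq> B" "B \<subseteq> D" "vec.independent B" "D \<subseteq> vec.span B"
    using vec.maximal_independent_subset_extend[of "{c}" D] c by auto
  obtain B0 where B0: "B = insert c B0" "c \<notin> B0"
    using B(1) mk_disjoint_insert[of c B] by auto
  have span_B: "vec.span (insert c B0) = D"
    using vec.span_minimal[OF B(2) D] B(4) unfolding B0(1) by (rule subset_antisym)
  have c_notin: "c \<notin> vec.span B0"
    using B(3) B0(2) unfolding B0(1) vec.independent_insert by simp
  have "inj_on f (vec.span B0)"
  proof (subst vec.linear_inj_on_iff_eq_0[OF f vec.subspace_span], intro ballI impI)
    fix u assume u: "u \<in> vec.span B0" and "f u = 0"
    moreover have "vec.span B0 \<subseteq> D"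
      using span_B vec.span_mono[of B0 "insert c B0"] by auto
    ultimately obtain a where a: "u = a *s c"
      using kernel by (auto simp: vec.span_singleton)
    show "u = 0"
    proof (rule ccontr)
      assume "u \<noteq> 0"
      then have "a \<noteq> 0"
        using a by auto
      then have "inverse a *s u = c"
        using a by simp
      then show False
        using vec.span_scale[OF u, of "inverse a"] c_notin by simp
    qed
  qed
  then have "vec.dim (f ` B0) = vec.dim B0"
    using f by (rule vec.dim_image_eq[rotated])
  moreover have "f ` D = vec.span (f ` B0)"
    using vec.linear_span_image[OF f, of "insert c B0"] c(3) by (simp add: span_B)
  moreover have "vec.dim D = vec.dim B0 + 1"
    using c_notin vec.dim_insert[of c B0] vec.dim_span[of "insert c B0"] by (simp add: span_B)
  ultimately show ?thesis
    by simp
qed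

locale min_weight_word =
  fixes C :: "('a::{field,finite} ^ 'n) set" and c :: "'a ^ 'n"
  assumes subspace: "vec.subspace C" and mem: "c \<in> C" and nonzero: "c \<noteq> 0"
    and minimal: "\<And>x. x \<in> C \<Longrightarrow> x \<noteq> 0 \<Longrightarrow> hamming_weight c \<le> hamming_weight x"
begin

abbreviation residual :: "'a ^ 'n \<Rightarrow> 'a ^ 'n" where
  "residual \<equiv> puncture (vec_support c)"

lemma residual_self [simp]: "residual c = 0"
  by (simp add: puncture_eq_0_iff)

lemma residual_eq_0_imp_multiple:
  assumes x: "x \<in> C" and "residual x = 0"
  shows "x \<in> vec.span {c}"
proof (cases "x = 0")
  case False
  have supp: "vec_support x \<subseteq> vec_support c"
    using assms(2) by (simp add: puncture_eq_0_iff)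
  obtain j where "x $ j \<noteq> 0"
    using False by (auto simp: vec_eq_iff)
  then have "j \<in> vec_support c"
    using supp by (auto simp: vec_support_def)
  define \<beta> where "\<beta> = c $ j / x $ j"
  define z where "z = c - \<beta> *s x"
  have "z \<in> C"
    unfolding z_def using subspace mem x by (simp add: vec.subspace_diff vec.subspace_scale)
  have "vec_support z \<subseteq> vec_support c - {j}"
    using supp \<open>x $ j \<noteq> 0\<close> by (auto simp: z_def \<beta>_def vec_support_def)
  then have "hamming_weight z < hamming_weight c"
    unfolding hamming_weight_def using \<open>j \<in> vec_support c\<close>
    by (meson card_Diff1_less card_mono finite order_le_less_trans)
  then have "z = 0"
    using minimal \<open>z \<in> C\<close> by (meson leD)
  moreover have "\<beta> \<noteq> 0"
    using \<open>j \<in> vec_support c\<close> \<open>x $ j \<noteq> 0\<close> by (simp add: \<beta>_def vec_support_def)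
  ultimately have "x = inverse \<beta> *s c"
    by (simp add: z_def)
  then show ?thesis
    by (simp add: vec.span_base vec.span_scale)
qed (simp add: vec.span_zero)

lemma residual_weight:
  assumes x: "x \<in> C" and "residual x \<noteq> 0"
  shows "ceil_div (hamming_weight c) CARD('a) \<le> hamming_weight (residual x)"
proof -
  (* Pigeonhole on the ratios x_j / c_j: some alpha occurs on at least wt c / q coordinates of
     supp c, and x - alpha c vanishes on all of them. *)
  define T where "T = vec_support c"
  obtain \<alpha> where \<alpha>: "card T \<le> card ((\<lambda>j. x $ j / c $ j) -` {\<alpha>} \<inter> T) * CARD('a)"
    using pigeonhole_card[of "\<lambda>j. x $ j / c $ j" T UNIV] by auto
  define A where "A = {j\<in>T. x $ j = \<alpha> * c $ j}"
  have "(\<lambda>j. x $ j / c $ j) -` {\<alpha>} \<inter> T = A"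
    by (auto simp: A_def T_def vec_support_def field_simps)
  with \<alpha> have card_T: "hamming_weight c \<le> card A * CARD('a)"
    by (simp add: hamming_weight_def T_def)
  define z where "z = x - \<alpha> *s c"
  have "z \<in> C"
    unfolding z_def using subspace mem x by (simp add: vec.subspace_diff vec.subspace_scale)
  moreover have "residual z = residual x"
    by (auto simp: z_def puncture_def vec_support_def vec_eq_iff)
  moreover have "z \<noteq> 0"
    using calculation(2) assms(2) by auto
  ultimately have "hamming_weight c \<le> hamming_weight z"
    using minimal by blast
  also have "hamming_weight z \<le> hamming_weight (residual x) + card (T - A)"
  proof -
    have "vec_support z \<subseteq> vec_support (residual x) \<union> (T - A)"
      by (auto simp: z_def A_def T_def vec_support_def puncture_def)
    then show ?thesis
      unfolding hamming_weight_def by (meson card_Un_le card_mono finite le_trans)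
  qed
  also have "card (T - A) = hamming_weight c - card A"
    by (simp add: hamming_weight_def T_def card_Diff_subset A_def)
  finally have "card A \<le> hamming_weight (residual x)"
    using card_mono[of T A] by (simp add: hamming_weight_def T_def A_def)
  with card_T show ?thesis
    by (simp add: ceil_div_le_iff order_trans)
qed

lemma dim_residual_image:
  assumes "vec.subspace D" "c \<in> D" "D \<subseteq> C"
  shows "vec.dim (residual ` D) + 1 = vec.dim D"
  using assms nonzero residual_eq_0_imp_multiple
  by (intro dim_image_line_kernel linear_puncture) auto

lemma card_code_support_residual:
  "card (code_support (residual ` C)) + hamming_weight c = card (code_support C)"
proof -
  have "vec_support c \<subseteq> code_support C"
    using mem by (auto simp: vec_support_def code_support_def)
  then show ?thesis
    by (simp add: code_support_puncture_image card_Diff_subset hamming_weight_def card_mono)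
qed

lemma lift_residual_subcode:
  assumes D1: "vec.subspace D1" "D1 \<subseteq> residual ` C"
  obtains D where "vec.subspace D" "D \<subseteq> C" "vec.dim D = vec.dim D1 + 1"
    "card (code_support D) \<le> hamming_weight c + card (code_support D1)"
proof
  define D where "D = C \<inter> residual -` D1"
  show "vec.subspace D"
    unfolding D_def using subspace D1(1)
    by (intro vec.subspace_inter vec.linear_subspace_vimage[OF linear_puncture])
  show "D \<subseteq> C"
    by (auto simp: D_def)
  have "residual ` D = D1"
    using D1(2) by (auto simp: D_def)
  moreover have "c \<in> D"
    using mem vec.subspace_0[OF D1(1)] by (simp add: D_def)
  ultimately show "vec.dim D = vec.dim D1 + 1"
    using dim_residual_image \<open>vec.subspace D\<close> \<open>D \<subseteq> C\<close> by metis
  have "code_support D \<subseteq> vec_support c \<union> code_support D1"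
  proof
    fix i assume "i \<in> code_support D"
    then obtain x where "x \<in> D" "x $ i \<noteq> 0"
      by (auto simp: code_support_def)
    show "i \<in> vec_support c \<union> code_support D1"
    proof (cases "i \<in> vec_support c")
      case False
      then have "residual x $ i \<noteq> 0"
        using \<open>x $ i \<noteq> 0\<close> by (simp add: puncture_def)
      with \<open>x \<in> D\<close> show ?thesis
        unfolding code_support_def D_def by blast
    qed simp
  qed
  then show "card (code_support D) \<le> hamming_weight c + card (code_support D1)"
    unfolding hamming_weight_def by (meson card_Un_le card_mono finite le_trans)
qed

end

lemma ex_min_weight_word:
  fixes C :: "('a::{field,finite} ^ 'n) set"
  assumes "vec.subspace C" "vec.dim C \<noteq> 0"
  obtains c where "min_weight_word C c"
proof -
  have "\<not> C \<subseteq> {0}"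
    using assms(2) by simp
  then obtain x where "x \<in> C" "x \<noteq> 0"
    by auto
  then obtain c where "c \<in> C \<and> c \<noteq> 0" "\<And>y. y \<in> C \<and> y \<noteq> 0 \<Longrightarrow> hamming_weight c \<le> hamming_weight y"
    using ex_has_least_nat[of "\<lambda>x. x \<in> C \<and> x \<noteq> 0" x hamming_weight] by blast
  with assms(1) show ?thesis
    by (intro that[of c]) (simp add: min_weight_word_def)
qed

lemma griesmer_bound:
  fixes C :: "('a::{field,finite} ^ 'n) set"
  assumes "vec.subspace C" "vec.dim C = k" "\<And>x. x \<in> C \<Longrightarrow> x \<noteq> 0 \<Longrightarrow> d \<le> hamming_weight x"
  shows "griesmer CARD('a) k d \<le> card (code_support C)"
  using assms
proof (induction k arbitrary: C d)
  case 0
  then show ?case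
    by (simp add: griesmer_def)
next
  case (Suc k)
  obtain c where "min_weight_word C c"
    using ex_min_weight_word[OF Suc.prems(1)] Suc.prems(2) by auto
  then interpret min_weight_word C c .
  have "d \<le> hamming_weight c"
    using Suc.prems(3) mem nonzero by blast
  then have "\<And>y. y \<in> residual ` C \<Longrightarrow> y \<noteq> 0 \<Longrightarrow> ceil_div d CARD('a) \<le> hamming_weight y"
    using residual_weight ceil_div_mono order_trans by blast
  moreover have "vec.dim (residual ` C) = k"
    using dim_residual_image[OF subspace mem] Suc.prems(2) by simp
  ultimately have "griesmer CARD('a) k (ceil_div d CARD('a)) \<le> card (code_support (residual ` C))"
    using vec.linear_subspace_image[OF linear_puncture subspace] by (intro Suc.IH)
  with \<open>d \<le> hamming_weight c\<close> show ?case
    using card_code_support_residual by (simp add: griesmer_Suc)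
qed

lemma griesmer_code_subcode:
  fixes C :: "('a::{field,finite} ^ 'n) set"
  assumes "vec.subspace C" "vec.dim C = k" "\<And>x. x \<in> C \<Longrightarrow> x \<noteq> 0 \<Longrightarrow> d \<le> hamming_weight x"
    and "card (code_support C) \<le> griesmer CARD('a) k d" and "r \<le> k"
  shows "\<exists>D. vec.subspace D \<and> D \<subseteq> C \<and> vec.dim D = r \<and> card (code_support D) \<le> griesmer CARD('a) r d"
  using assms
proof (induction r arbitrary: k C d)
  case 0
  have "{0} \<subseteq> C"
    using "0.prems"(1) vec.subspace_0 by blast
  then show ?case
    by (intro exI[of _ "{0}"]) (simp add: code_support_def griesmer_def)
next
  case (Suc r)
  obtain k' where k: "k = Suc k'"
    using Suc.prems(5) Suc_le_D by blast
  then obtain c where "min_weight_word C c"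
    using ex_min_weight_word[OF Suc.prems(1)] Suc.prems(2) by auto
  then interpret min_weight_word C c .
  (* a minimum-weight word heavier than d would push the Griesmer bound beyond the length *)
  have "griesmer CARD('a) k (hamming_weight c) \<le> griesmer CARD('a) k d"
    using griesmer_bound[OF subspace Suc.prems(2) minimal] Suc.prems(4) by simp
  then have weight_c: "hamming_weight c = d"
    using Suc.prems(3)[OF mem nonzero] griesmer_strict_mono[of "CARD('a)" k d "hamming_weight c"] k
    by fastforce
  then have res_weight: "\<And>y. y \<in> residual ` C \<Longrightarrow> y \<noteq> 0 \<Longrightarrow> ceil_div d CARD('a) \<le> hamming_weight y"
    using residual_weight by blast
  have res_dim: "vec.dim (residual ` C) = k'"
    using dim_residual_image[OF subspace mem] Suc.prems(2) k by simp
  have res_card: "card (code_support (residual ` C)) \<le> griesmer CARD('a) k' (ceil_div d CARD('a))"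
    using card_code_support_residual Suc.prems(4) weight_c k by (simp add: griesmer_Suc)
  obtain D1 where D1: "vec.subspace D1" "D1 \<subseteq> residual ` C" "vec.dim D1 = r"
      "card (code_support D1) \<le> griesmer CARD('a) r (ceil_div d CARD('a))"
    using Suc.IH[OF vec.linear_subspace_image[OF linear_puncture subspace] res_dim res_weight res_card]
      Suc.prems(5) k by auto
  then obtain D where "vec.subspace D" "D \<subseteq> C" "vec.dim D = Suc r"
      "card (code_support D) \<le> d + card (code_support D1)"
    using lift_residual_subcode weight_c by (metis Suc_eq_plus1)
  with D1(4) show ?case
    by (intro exI[of _ D]) (simp add: griesmer_Suc)
qed

lemma card_code_support_le: "card (code_support (C :: ('a::zero ^ 'n) set)) \<le> CARD('n)"
  by (simp add: card_mono)

lemma min_dist_le_hamming_weight: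
  fixes C :: "('a::zero ^ 'n) set"
  assumes "0 \<in> C" "x \<in> C" "x \<noteq> 0"
  shows "min_dist C \<le> hamming_weight x"
proof -
  have "{hamming_dist x y | x y. x \<in> C \<and> y \<in> C \<and> x \<noteq> y} \<subseteq> {..CARD('n)}"
    by (auto simp: hamming_dist_def card_mono)
  moreover have "hamming_weight x \<in> {hamming_dist x y | x y. x \<in> C \<and> y \<in> C \<and> x \<noteq> y}"
    using assms hamming_dist_0[of x, symmetric] by blast
  ultimately show ?thesis
    unfolding min_dist_def by (auto intro: Min_le finite_subset)
qed

lemma gen_weight_eq_griesmer:
  fixes C :: "('a::{field,finite} ^ 'n) set"
  assumes C: "vec.subspace C" "vec.dim C = k" and weights: "\<And>x. x \<in> C \<Longrightarrow> x \<noteq> 0 \<Longrightarrow> d \<le> hamming_weight x"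
    and "card (code_support C) \<le> griesmer CARD('a) k d" and "r \<le> k"
  shows "gen_weight C r = griesmer CARD('a) r d"
proof -
  let ?W = "{card (code_support D) | D. vec.subspace D \<and> D \<subseteq> C \<and> vec.dim D = r}"
  have "finite ?W"
    by (rule finite_subset[of _ "{..CARD('n)}"]) (auto simp: card_code_support_le)
  have lower: "griesmer CARD('a) r d \<le> card (code_support D)"
    if "vec.subspace D" "D \<subseteq> C" "vec.dim D = r" for D
    using that weights by (intro griesmer_bound) auto
  obtain D where "vec.subspace D" "D \<subseteq> C" "vec.dim D = r" "card (code_support D) \<le> griesmer CARD('a) r d"
    using griesmer_code_subcode[OF assms] by blast
  with lower have "griesmer CARD('a) r d \<in> ?W"
    by (metis (mono_tags, lifting) le_antisym mem_Collect_eq)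
  with \<open>finite ?W\<close> lower show ?thesis
    unfolding gen_weight_def by (intro Min_eqI) auto
qed

lemma card_field_ge_2: "CARD('a::{field,finite}) \<ge> 2"
  using card_mono[of UNIV "{0::'a, 1}"] by simp

theorem mainTheorem2:
  fixes C :: "('a::{field,finite} ^ 'n) set"
    and k d :: nat and \<sigma> :: int and \<epsilon> :: "nat \<Rightarrow> int"
  assumes "k \<ge> 1" and "d \<ge> 1"
    and "\<And>i. i < k - 1 \<Longrightarrow> 0 \<le> \<epsilon> i \<and> \<epsilon> i \<le> int CARD('a) - 1"
    and "int d = \<sigma> * int CARD('a) ^ (k - 1) - (\<Sum>i\<in>{0..<k-1}. \<epsilon> i * int CARD('a) ^ i)"
    and "is_linear_code C k d"
    and "CARD('n) = griesmer CARD('a) k d"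
  shows "\<forall>r\<in>{1..k}.
     int (gen_weight C r) =
       int (vnum CARD('a) r) * (\<sigma> * int CARD('a) ^ (k - r)
          - (\<Sum>i\<in>{r..k-1}. \<epsilon> (i - 1) * int CARD('a) ^ (i - r)))
       - (\<Sum>i\<in>{1..r-1}. \<epsilon> (i - 1) * int (vnum CARD('a) i))
     \<and> CARD('n) = griesmer_r CARD('a) r k (gen_weight C r)"
proof (intro ballI)
  fix r assume r: "r \<in> {1..k}"
  interpret q_adic_expansion "CARD('a)" k d \<sigma> \<epsilon>
    using card_field_ge_2 assms(3,4) by unfold_locales
  have C: "vec.subspace C" "vec.dim C = k" "min_dist C = d"
    using assms(5) by (auto simp: is_linear_code_def)
  then have "\<And>x. x \<in> C \<Longrightarrow> x \<noteq> 0 \<Longrightarrow> d \<le> hamming_weight x"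
    using min_dist_le_hamming_weight vec.subspace_0 by metis
  then have "gen_weight C r = griesmer CARD('a) r d"
    using gen_weight_eq_griesmer[OF C(1,2)] card_code_support_le[of C] assms(6) r by simp
  then show "int (gen_weight C r) =
       int (vnum CARD('a) r) * (\<sigma> * int CARD('a) ^ (k - r)
          - (\<Sum>i\<in>{r..k-1}. \<epsilon> (i - 1) * int CARD('a) ^ (i - r)))
       - (\<Sum>i\<in>{1..r-1}. \<epsilon> (i - 1) * int (vnum CARD('a) i))
     \<and> CARD('n) = griesmer_r CARD('a) r k (gen_weight C r)"
    using griesmer_closed_form griesmer_r_griesmer[OF q] assms(6) r by simp
qed

end
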